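(* In the setting of the context, with $S,E,I$ as defined there, the function $E(t)+I(t)$ attains its maximum \[ \max_{t\ge0}\bigl(E(t)+I(t)\bigr)=\tilde S+\tilde E+\tilde I-\frac{\gamma}{\beta}\Bigl(1+\log\tilde S-\log\frac{\gamma}{\beta}\Bigr) \] at \[ t=T_3:=\varphi\Bigl(\frac{\gamma}{\beta\tilde S e^{(\beta/\gamma)\tilde R}}\Bigr)=\int_{\gamma/(\beta\tilde S e^{(\beta/\gamma)\tilde R})}^{u_0}\frac{d\xi}{\xi\psi(\xi)}=S^{-1}\Bigl(\frac{\gamma}{\beta}\Bigr). \] Moreover, $E+I$ is increasing on $[0,T_3)$ and decreasing on $(T_3,\infty)$.
   Context: Let $\beta,\gamma,\delta>0$ be constants and $\tilde S,\tilde E,\tilde I,\tilde R$ real numbers with $N:=\tilde S+\tilde E+\tilde I+\tilde R>0$. Standing assumptions: (A1) $\tilde I>0$; (A2) $\tilde E>(\gamma/\delta)\tilde I$; (A3) $\tilde S>\delta\tilde E/(\beta\tilde I)$; (A4) $\tilde R\ge 0$ and $N>\tilde S e^{(\beta/\gamma)\tilde R}+\tilde R$. Let $\alpha$ be the unique solution in $(\tilde R,N)$ of $x=N-\tilde S e^{(\beta/\gamma)\tilde R}e^{-(\beta/\gamma)x}$, and assume (A5) $\tilde S<(\gamma/\beta)e^{(\beta/\gamma)(\alpha-\tilde R)}$. Put $u_0:=e^{-(\beta/\gamma)\tilde R}$, $u_\infty:=e^{-(\beta/\gamma)\alpha}$. Let $\psi$ be the unique function, continuous and positive on $(u_\infty,u_0]$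 and $C^1$ on $(u_\infty,u_0)$, satisfying $\psi'(u)\psi(u)-\frac{\gamma+\delta}{u}\psi(u)=-\delta\,\frac{\beta N-\beta\tilde S e^{(\beta/\gamma)\tilde R}u+\gamma\log u}{u}$ on $(u_\infty,u_0)$ and $\psi(u_0)=\beta\tilde I$. Let $\varphi(u):=\int_u^{u_0}\frac{d\xi}{\xi\psi(\xi)}$; $\varphi$ is a strictly decreasing continuous bijection from $(u_\infty,u_0]$ onto $[0,\infty)$, $C^1$ on $(u_\infty,u_0)$, with inverse $\varphi^{-1}:[0,\infty)\to(u_\infty,u_0]$. For $t\ge 0$ define $S(t)=\tilde S e^{(\beta/\gamma)\tilde R}\varphi^{-1}(t)$, $E(t)=\tilde E e^{-\delta t}+\tilde S e^{(\beta/\gamma)\tilde R}e^{-\delta t}\int_{\varphi^{-1}(t)}^{u_0}e^{\delta\varphi(v)}dv$, $I(t)=N-\tilde S e^{(\beta/\gamma)\tilde R}\varphi^{-1}(t)+\frac{\gamma}{\beta}\log\varphi^{-1}(t)-E(t)$; $S^{-1}$ denotes the inverse of the strictly decreasing function $S$. *)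

theory Defs
  imports "HOL-Analysis.Analysis"
begin

end

theory Submission
  imports Defs
begin

text \<open>In terms of \<open>u = \<phi>\<^sup>-\<^sup>1(t)\<close> one has \<open>S = c u\<close> with \<open>c = S\<^sub>0 e\<^bsup>\<beta>R\<^sub>0/\<gamma>\<^esup>\<close>, and the
  definition of \<open>I\<close> says exactly that \<open>E + I = N - c u + (\<gamma>/\<beta>) ln u\<close>. This concave function of \<open>u\<close>
  increases up to \<open>u = \<gamma>/(\<beta>c)\<close>, where \<open>S = \<gamma>/\<beta>\<close>, and decreases afterwards. By (A2), (A3) and (A5)
  that point lies in \<open>(u\<^sub>\<infinity>, u\<^sub>0]\<close>, and \<open>\<phi>\<^sup>-\<^sup>1\<close> is strictly decreasing because \<open>\<phi>\<close> is an
  integral of a positive function over \<open>[u, u\<^sub>0]\<close>; so \<open>E + I\<close> rises until \<open>T\<^sub>3 = \<phi>(\<gamma>/(\<beta>c))\<close> and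
  falls afterwards.\<close>

lemma strict_mono_on_linear_plus_ln:
  fixes a c k :: real
  assumes "0 < c" "0 < k"
  shows "strict_mono_on {0<..k/c} (\<lambda>u. a - c * u + k * ln u)"
proof (rule strict_mono_onI)
  fix x y :: real assume "x \<in> {0<..k/c}" "y \<in> {0<..k/c}" "x < y"
  then have "(y - x) / (k/c) \<le> (y - x) / y"
    using assms by (intro divide_left_mono mult_pos_pos) auto
  also have "\<dots> < ln y - ln x"
    using ln_diff_less[of x y] \<open>x \<in> {0<..k/c}\<close> \<open>y \<in> {0<..k/c}\<close> \<open>x < y\<close>
    by (simp add: field_simps)
  finally have "k * ((y - x) / (k/c)) < k * (ln y - ln x)"
    using assms(2) by (rule mult_strict_left_mono)
  moreover have "k * ((y - x) / (k/c)) = c * (y - x)"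
    using assms by simp
  ultimately show "a - c * x + k * ln x < a - c * y + k * ln y"
    by (simp add: algebra_simps)
qed

lemma strict_antimono_on_linear_plus_ln:
  fixes a c k :: real
  assumes "0 < c" "0 < k"
  shows "strict_antimono_on {k/c..} (\<lambda>u. a - c * u + k * ln u)"
proof (rule monotone_onI)
  fix x y :: real assume "x \<in> {k/c..}" "y \<in> {k/c..}" "x < y"
  have "0 < k/c"
    using assms by simp
  then have "0 < x"
    using \<open>x \<in> {k/c..}\<close> by simp
  then have "ln y - ln x < (y - x) / x"
    using ln_diff_less[of y x] \<open>x < y\<close> by simp
  also have "\<dots> \<le> (y - x) / (k/c)"
    using \<open>0 < k/c\<close> \<open>0 < x\<close> \<open>x \<in> {k/c..}\<close> \<open>x < y\<close>
    by (intro divide_left_mono mult_pos_pos) auto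
  finally have "k * (ln y - ln x) < k * ((y - x) / (k/c))"
    using assms(2) by (rule mult_strict_left_mono)
  moreover have "k * ((y - x) / (k/c)) = c * (y - x)"
    using assms by simp
  ultimately show "a - c * y + k * ln y < a - c * x + k * ln x"
    by (simp add: algebra_simps)
qed

lemma linear_plus_ln_le_max:
  fixes a c k u :: real
  assumes "0 < c" "0 < k" "0 < u"
  shows "a - c * u + k * ln u \<le> a - c * (k/c) + k * ln (k/c)"
proof -
  have "ln u - ln (k/c) \<le> (u - k/c) / (k/c)"
    using ln_diff_le[of u "k/c"] assms by simp
  then have "k * (ln u - ln (k/c)) \<le> k * ((u - k/c) / (k/c))"
    using assms(2) by (intro mult_left_mono) auto
  moreover have "k * ((u - k/c) / (k/c)) = c * u - c * (k/c)"
    using assms by (simp add: field_simps)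
  ultimately show ?thesis
    by (simp add: algebra_simps)
qed

lemma antimono_on_integral_lower_limit:
  fixes f :: "real \<Rightarrow> real"
  assumes "continuous_on {a<..c} f" "\<forall>x\<in>{a<..c}. 0 \<le> f x"
  shows "antimono_on {a<..c} (\<lambda>u. integral {u..c} f)"
proof (rule monotone_onI)
  fix x y assume "x \<in> {a<..c}" "y \<in> {a<..c}" "x \<le> y"
  then have sub: "{y..c} \<subseteq> {x..c}" "{x..c} \<subseteq> {a<..c}" by auto
  then have "f integrable_on {x..c}"
    using assms(1) by (intro integrable_continuous_interval) (rule continuous_on_subset)
  then show "integral {y..c} f \<le> integral {x..c} f"
    using sub assms(2) by (intro integral_subset_le) (auto intro: integrable_on_subinterval)
qed

lemma strict_antimono_on_the_inv_into:
  fixes f :: "'a::linorder \<Rightarrow> 'b::linorder"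
  assumes "bij_betw f A B" "antimono_on A f"
  shows "strict_antimono_on B (the_inv_into A f)"
proof (rule monotone_onI)
  fix s t assume "s \<in> B" "t \<in> B" "s < t"
  have inv: "the_inv_into A f y \<in> A" "f (the_inv_into A f y) = y" if "y \<in> B" for y
    using assms(1) that
    by (auto simp: bij_betw_def intro: the_inv_into_into f_the_inv_into_f)
  show "the_inv_into A f t < the_inv_into A f s"
  proof (rule ccontr)
    assume "\<not> ?thesis"
    then have "f (the_inv_into A f s) \<ge> f (the_inv_into A f t)"
      using \<open>s \<in> B\<close> \<open>t \<in> B\<close> inv by (intro monotone_onD[OF assms(2)]) auto
    with \<open>s \<in> B\<close> \<open>t \<in> B\<close> \<open>s < t\<close> show False using inv by simp
  qed
qed

lemma phi_inverse_strict_antimono_pos: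
  fixes \<psi> :: "real \<Rightarrow> real" and a b :: real
  defines "\<phi> \<equiv> \<lambda>u. integral {u..b} (\<lambda>\<xi>. 1 / (\<xi> * \<psi> \<xi>))"
  assumes "0 \<le> a" "continuous_on {a<..b} \<psi>" "\<forall>u\<in>{a<..b}. 0 < \<psi> u"
    and "bij_betw \<phi> {a<..b} {0..}"
  shows "strict_antimono_on {0..} (the_inv_into {a<..b} \<phi>)"
    and "\<forall>t\<ge>0. 0 < the_inv_into {a<..b} \<phi> t"
proof -
  have "\<forall>\<xi>\<in>{a<..b}. 0 < \<xi> * \<psi> \<xi>"
    using assms(2,4) by (auto intro!: mult_pos_pos)
  then have "antimono_on {a<..b} \<phi>"
    unfolding \<phi>_def using assms(3)
    by (intro antimono_on_integral_lower_limit continuous_intros) (fastforce simp: less_imp_le)+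
  then show "strict_antimono_on {0..} (the_inv_into {a<..b} \<phi>)"
    using assms(5) by (intro strict_antimono_on_the_inv_into)
  show "\<forall>t\<ge>0. 0 < the_inv_into {a<..b} \<phi> t"
  proof (intro allI impI)
    fix t :: real assume "0 \<le> t"
    then have "the_inv_into {a<..b} \<phi> t \<in> {a<..b}"
      using assms(5) unfolding bij_betw_def by (intro the_inv_into_into) auto
    then show "0 < the_inv_into {a<..b} \<phi> t"
      using assms(2) by auto
  qed
qed

lemma peak_linear_plus_ln_of_strict_antimono:
  fixes h :: "real \<Rightarrow> real" and a c k T :: real
  assumes "0 < c" "0 < k" and h: "strict_antimono_on {0..} h" "\<forall>t\<ge>0. 0 < h t"
    and T: "0 \<le> T" "h T = k/c"
  shows "\<forall>t\<ge>0. a - c * h t + k * ln (h t) \<le> a - c * h T + k * ln (h T)"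
    and "strict_mono_on {0..<T} (\<lambda>t. a - c * h t + k * ln (h t))"
    and "strict_antimono_on {T<..} (\<lambda>t. a - c * h t + k * ln (h t))"
proof -
  show "\<forall>t\<ge>0. a - c * h t + k * ln (h t) \<le> a - c * h T + k * ln (h T)"
    using linear_plus_ln_le_max[OF assms(1,2)] h(2) T(2) by simp
  have h_less: "h t < h s" if "0 \<le> s" "s < t" for s t
    using monotone_onD[OF h(1)] that by simp
  show "strict_mono_on {0..<T} (\<lambda>t. a - c * h t + k * ln (h t))"
  proof (rule strict_mono_onI)
    fix s t assume "s \<in> {0..<T}" "t \<in> {0..<T}" "s < t"
    then have "k/c < h t" "h t < h s"
      using h_less[of t T] h_less[of s t] T by auto
    then show "a - c * h s + k * ln (h s) < a - c * h t + k * ln (h t)"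
      using monotone_onD[OF strict_antimono_on_linear_plus_ln[OF assms(1,2)]] by simp
  qed
  show "strict_antimono_on {T<..} (\<lambda>t. a - c * h t + k * ln (h t))"
  proof (rule monotone_onI)
    fix s t assume "s \<in> {T<..}" "t \<in> {T<..}" "s < t"
    then have "0 < h t" "h t < h s" "h s < k/c"
      using h_less[of T s] h_less[of s t] h(2) T by auto
    then show "a - c * h t + k * ln (h t) < a - c * h s + k * ln (h s)"
      using monotone_onD[OF strict_mono_on_linear_plus_ln[OF assms(1,2)]] by simp
  qed
qed

lemma recovery_ratio_less_susceptible:
  fixes \<beta> \<gamma> \<delta> St Et It :: real
  assumes "0 < \<beta>" "0 < \<delta>" "0 < It" "(\<gamma> / \<delta>) * It < Et" "\<delta> * Et / (\<beta> * It) < St"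
  shows "\<gamma> / \<beta> < St"
proof -
  have "\<gamma> * It < \<delta> * Et"
    using assms(2,4) by (simp add: field_simps)
  also have "\<dots> < \<beta> * St * It"
    using assms(1,3,5) by (simp add: field_simps)
  finally show ?thesis
    using assms(1,3) by (simp add: field_simps)
qed

lemma herd_immunity_point_in_range:
  fixes \<beta> \<gamma> St Rt \<alpha> :: real
  assumes "0 < \<beta>" "0 < \<gamma>" "\<gamma> / \<beta> < St" "St < (\<gamma> / \<beta>) * exp ((\<beta> / \<gamma>) * (\<alpha> - Rt))"
  shows "(\<gamma> / \<beta>) / (St * exp ((\<beta> / \<gamma>) * Rt)) \<in> {exp (- (\<beta> / \<gamma>) * \<alpha>)<..exp (- (\<beta> / \<gamma>) * Rt)}"
proof -
  have "0 < St"
    using assms(1-3) by (meson divide_pos_pos less_trans)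
  moreover have "St * exp ((\<beta> / \<gamma>) * Rt) < (\<gamma> / \<beta>) * exp ((\<beta> / \<gamma>) * \<alpha>)"
  proof -
    have "St * exp ((\<beta> / \<gamma>) * Rt) < (\<gamma> / \<beta>) * exp ((\<beta> / \<gamma>) * (\<alpha> - Rt)) * exp ((\<beta> / \<gamma>) * Rt)"
      using assms(4) by (intro mult_strict_right_mono) auto
    also have "\<dots> = (\<gamma> / \<beta>) * exp ((\<beta> / \<gamma>) * (\<alpha> - Rt) + (\<beta> / \<gamma>) * Rt)"
      by (simp add: exp_add)
    also have "\<dots> = (\<gamma> / \<beta>) * exp ((\<beta> / \<gamma>) * \<alpha>)"
      by (simp add: right_diff_distrib)
    finally show ?thesis .
  qed
  ultimately show ?thesis
    using assms(1-3) by (simp add: exp_minus field_simps)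
qed

lemma SEIR_peak_value:
  fixes \<beta> \<gamma> St Et It Rt :: real
  assumes "0 < \<beta>" "0 < \<gamma>" "0 < St"
  defines "k \<equiv> \<gamma> / \<beta>" and "c \<equiv> St * exp ((\<beta> / \<gamma>) * Rt)"
  shows "(St + Et + It + Rt) - c * (k / c) + k * ln (k / c) = St + Et + It - k * (1 + ln St - ln k)"
proof -
  have "ln (k / c) = ln k - ln St - (\<beta> / \<gamma>) * Rt"
    using assms(1-3) by (simp add: k_def c_def ln_div ln_mult)
  then have "k * ln (k / c) = k * ln k - k * ln St - Rt"
    using assms(1,2) by (simp add: k_def right_diff_distrib)
  moreover have "c * (k / c) = k"
    using assms(3) by (simp add: c_def)
  ultimately show ?thesis
    by (simp add: algebra_simps)
qed

theorem theorem11: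
  fixes \<beta> \<gamma> \<delta> St Et It Rt N \<alpha> u0 uinf :: real
    and \<psi> \<psi>' :: "real \<Rightarrow> real"
    and \<phi> \<phi>inv S E I :: "real \<Rightarrow> real"
  assumes pos: "\<beta> > 0" "\<gamma> > 0" "\<delta> > 0"
    and N_def: "N = St + Et + It + Rt" and Npos: "N > 0"
    and A1: "It > 0"
    and A2: "Et > (\<gamma> / \<delta>) * It"
    and A3: "St > \<delta> * Et / (\<beta> * It)"
    and A4: "Rt \<ge> 0" "N > St * exp ((\<beta> / \<gamma>) * Rt) + Rt"
    and alpha: "Rt < \<alpha>" "\<alpha> < N"
      "\<alpha> = N - St * exp ((\<beta> / \<gamma>) * Rt) * exp (- (\<beta> / \<gamma>) * \<alpha>)"
    and A5: "St < (\<gamma> / \<beta>) * exp ((\<beta> / \<gamma>) * (\<alpha> - Rt))"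
    and u0_def: "u0 = exp (- (\<beta> / \<gamma>) * Rt)"
    and uinf_def: "uinf = exp (- (\<beta> / \<gamma>) * \<alpha>)"
    and psi_cont: "continuous_on {uinf<..u0} \<psi>"
    and psi_pos: "\<forall>u\<in>{uinf<..u0}. \<psi> u > 0"
    and psi_deriv: "\<forall>u\<in>{uinf<..<u0}. (\<psi> has_real_derivative \<psi>' u) (at u)"
    and psi'_cont: "continuous_on {uinf<..<u0} \<psi>'"
    and psi_ode: "\<forall>u\<in>{uinf<..<u0}. \<psi>' u * \<psi> u - (\<gamma> + \<delta>) / u * \<psi> u
        = - \<delta> * (\<beta> * N - \<beta> * St * exp ((\<beta> / \<gamma>) * Rt) * u + \<gamma> * ln u) / u"
    and psi_u0: "\<psi> u0 = \<beta> * It"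
    and phi_def: "\<phi> = (\<lambda>u. integral {u..u0} (\<lambda>\<xi>. 1 / (\<xi> * \<psi> \<xi>)))"
    and phi_bij: "bij_betw \<phi> {uinf<..u0} {0..}"
    and phiinv_def: "\<phi>inv = the_inv_into {uinf<..u0} \<phi>"
    and S_def: "S = (\<lambda>t. St * exp ((\<beta> / \<gamma>) * Rt) * \<phi>inv t)"
    and E_def: "E = (\<lambda>t. Et * exp (- \<delta> * t) + St * exp ((\<beta> / \<gamma>) * Rt) * exp (- \<delta> * t)
        * integral {\<phi>inv t..u0} (\<lambda>v. exp (\<delta> * \<phi> v)))"
    and I_def: "I = (\<lambda>t. N - St * exp ((\<beta> / \<gamma>) * Rt) * \<phi>inv t + (\<gamma> / \<beta>) * ln (\<phi>inv t) - E t)"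
  shows "\<exists>T3. T3 = \<phi> (\<gamma> / (\<beta> * St * exp ((\<beta> / \<gamma>) * Rt)))
     \<and> T3 = integral {\<gamma> / (\<beta> * St * exp ((\<beta> / \<gamma>) * Rt))..u0} (\<lambda>\<xi>. 1 / (\<xi> * \<psi> \<xi>))
     \<and> T3 \<ge> 0
     \<and> T3 = the_inv_into {0..} S (\<gamma> / \<beta>)
     \<and> E T3 + I T3 = St + Et + It - (\<gamma> / \<beta>) * (1 + ln St - ln (\<gamma> / \<beta>))
     \<and> (\<forall>t\<ge>0. E t + I t \<le> E T3 + I T3)
     \<and> strict_mono_on {0..<T3} (\<lambda>t. E t + I t)
     \<and> strict_antimono_on {T3<..} (\<lambda>t. E t + I t)"
proof -
  define k where "k = \<gamma> / \<beta>"
  define c where "c = St * exp ((\<beta> / \<gamma>) * Rt)"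
  define T3 where "T3 = \<phi> (k / c)"
  have "k < St"
    unfolding k_def using pos(1,3) A1 A2 A3 by (rule recovery_ratio_less_susceptible)
  moreover have "0 < k"
    using pos by (simp add: k_def)
  ultimately have kc: "0 < k" "0 < c" and peak_point: "\<gamma> / (\<beta> * St * exp ((\<beta> / \<gamma>) * Rt)) = k / c"
    by (auto simp: k_def c_def)
  have "k / c \<in> {uinf<..u0}"
    unfolding k_def c_def u0_def uinf_def using pos(1,2) \<open>k < St\<close>[unfolded k_def] A5
    by (rule herd_immunity_point_in_range)
  have "0 \<le> uinf"
    by (simp add: uinf_def)
  note phiinv = phi_inverse_strict_antimono_pos[OF this psi_cont psi_pos phi_bij[unfolded phi_def],
      folded phi_def phiinv_def]
  have T3: "0 \<le> T3" "\<phi>inv T3 = k / c"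
    unfolding T3_def phiinv_def using phi_bij \<open>k / c \<in> {uinf<..u0}\<close>
    by (auto simp: bij_betw_def the_inv_into_f_f)
  have EI: "E t + I t = N - c * \<phi>inv t + k * ln (\<phi>inv t)" for t
    by (simp add: I_def c_def k_def)
  have S_eq: "S = (\<lambda>t. c * \<phi>inv t)"
    by (simp add: S_def c_def)
  have "strict_antimono_on {0..} S"
    using monotone_onD[OF phiinv(1)] kc(2) by (intro monotone_onI) (simp add: S_eq)
  moreover have "S T3 = \<gamma> / \<beta>"
    using T3 kc by (simp add: S_eq k_def)
  ultimately have "T3 = the_inv_into {0..} S (\<gamma> / \<beta>)"
    using T3(1) by (metis strict_antimono_iff_antimono the_inv_into_f_f atLeast_iff)
  moreover have "E T3 + I T3 = St + Et + It - (\<gamma> / \<beta>) * (1 + ln St - ln (\<gamma> / \<beta>))"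
    using EI T3 SEIR_peak_value[OF pos(1,2), of St Et It Rt] \<open>k < St\<close> kc
    by (simp add: N_def k_def c_def)
  moreover note peak_linear_plus_ln_of_strict_antimono[OF kc(2,1) phiinv T3, of N]
  ultimately show ?thesis
    using T3 peak_point
    by (intro exI[of _ T3]) (auto simp: EI T3_def phi_def)
qed

end
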